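(* Let $(\mathcal{M},d)$ be an NPC space, $\gamma:[0,1]\to\mathcal{M}$ a geodesic and $\alpha\in[1,2]$. Then for every $\delta\ge0$, $t\in[0,1]$ and $z\in\mathcal{M}$, $$ d(\gamma_t,z)^\alpha\le(1+\delta)^{1-\alpha/2}\left[(1-t)^{\alpha/2}d(\gamma_0,z)^\alpha+t^{\alpha/2}d(\gamma_1,z)^\alpha\right]-\delta^{1-\alpha/2}\left[t(1-t)\,d(\gamma_0,\gamma_1)^2\right]^{\alpha/2}, $$ with the convention $0^0=1$.
   Context: A Polish space $(\mathcal{M},d)$ is an (global) NPC space if for any $x_0,x_1\in\mathcal{M}$ there is $y\in\mathcal{M}$ with $d(z,y)^2\le\frac12d(z,x_0)^2+\frac12d(z,x_1)^2-\frac14d(x_0,x_1)^2$ for all $z\in\mathcal{M}$. A geodesic is a map $\gamma:[0,1]\to\mathcal{M}$ with $d(\gamma_s,\gamma_t)=|s-t|\,d(\gamma_0,\gamma_1)$ for all $s,t$. In NPC spaces any two points are joined by a unique geodesic, and the CN inequality $d(\gamma_t,y)^2\le(1-t)d(\gamma_0,y)^2+t\,d(\gamma_1,y)^2-t(1-t)d(\gamma_0,\gamma_1)^2$ holds. *)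

theory Defs
  imports "HOL-Analysis.Analysis"
begin

definition NPC_space :: "'a::metric_space itself \<Rightarrow> bool" where
  "NPC_space _ \<longleftrightarrow> (\<forall>x0 x1::'a. \<exists>y::'a. \<forall>z::'a.
      (dist z y)^2 \<le> (1/2) * (dist z x0)^2 + (1/2) * (dist z x1)^2 - (1/4) * (dist x0 x1)^2)"

definition geodesic :: "(real \<Rightarrow> 'a::metric_space) \<Rightarrow> bool" where
  "geodesic g \<longleftrightarrow> (\<forall>s\<in>{0..1}. \<forall>t\<in>{0..1}. dist (g s) (g t) = \<bar>s - t\<bar> * dist (g 0) (g 1))"

definition rpow :: "real \<Rightarrow> real \<Rightarrow> real" (infixr "\<^bold>^" 80) where
  "x \<^bold>^ a = (if a = 0 then 1 else x powr a)"

end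

theory Submission
  imports Defs
begin

text \<open>
  In an NPC space the NPC midpoint of \<open>\<gamma> s\<close> and \<open>\<gamma> u\<close> is forced to be the geodesic midpoint
  \<open>\<gamma> ((s + u)/2)\<close>, so \<open>r \<mapsto> d(\<gamma> r, z)\<^sup>2 - r\<^sup>2 d(\<gamma> 0, \<gamma> 1)\<^sup>2\<close> is continuous and midpoint convex,
  hence convex on \<open>[0, 1]\<close>; this is the CN inequality \<open>F \<le> A + B - C\<close> with
  \<open>F = d(\<gamma> t, z)\<^sup>2\<close>, \<open>A = (1 - t) d(\<gamma> 0, z)\<^sup>2\<close>, \<open>B = t d(\<gamma> 1, z)\<^sup>2\<close>, \<open>C = t (1 - t) d(\<gamma> 0, \<gamma> 1)\<^sup>2\<close>.
  For \<open>p = \<alpha>/2 \<in> (0, 1]\<close> Holder's inequality for the two pairs \<open>(F, 1)\<close> and \<open>(C, \<delta>)\<close> gives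
  \<open>F\<^sup>p + C\<^sup>p \<delta>\<^sup>1\<^sup>-\<^sup>p \<le> (F + C)\<^sup>p (1 + \<delta>)\<^sup>1\<^sup>-\<^sup>p\<close>, and \<open>(F + C)\<^sup>p \<le> (A + B)\<^sup>p \<le> A\<^sup>p + B\<^sup>p\<close>
  by monotonicity and subadditivity of \<open>x\<^sup>p\<close>.
\<close>

lemma Youngs_inequality_nonneg:
  fixes a b p q :: real
  assumes "0 \<le> p" "0 \<le> q" "p + q = 1" "0 \<le> a" "0 \<le> b"
  shows "a powr p * b powr q \<le> p * a + q * b"
  using Youngs_inequality_0[of p q a b] assms by (cases "a = 0 \<or> b = 0") auto

lemma powr_add_le_add_powr:
  fixes a b p :: real
  assumes "0 < p" "p \<le> 1" "0 \<le> a" "0 \<le> b"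
  shows "(a + b) powr p \<le> a powr p + b powr p"
proof (cases "a + b = 0")
  case True
  then show ?thesis using assms by auto
next
  case False
  define S where "S = a + b"
  have S: "S > 0" using False assms S_def by auto
  have "x / S \<le> (x / S) powr p" if "0 \<le> x" "x \<le> S" for x
    using powr_mono'[of p 1 "x / S"] that assms S by simp
  then have "S powr p * (a / S) + S powr p * (b / S) \<le> S powr p * (a / S) powr p + S powr p * (b / S) powr p"
    using assms S_def by (intro add_mono mult_left_mono) auto
  moreover have "S powr p * (a / S) + S powr p * (b / S) = S powr p"
    using S by (simp add: S_def add_divide_distrib[symmetric] ring_distribs[symmetric])
  moreover have "S powr p * (x / S) powr p = x powr p" for x
    using S by (simp add: powr_divide)
  ultimately show ?thesis using S_def by simp
qed

lemma Holder_inequality_two_terms: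
  fixes x y d p q :: real
  assumes "0 < p" "0 \<le> q" "p + q = 1" "0 \<le> x" "0 \<le> y" "0 \<le> d"
  shows "x powr p + y powr p * d powr q \<le> (x + y) powr p * (1 + d) powr q"
proof (cases "x + y = 0")
  case True
  then have "x = 0" "y = 0" using assms by auto
  then show ?thesis using assms by simp
next
  case False
  define S T where "S = x + y" and "T = 1 + d"
  have S: "S > 0" and T: "T > 0" using False assms S_def T_def by auto
  define K where "K = S powr p * T powr q"
  have "x powr p = K * ((x / S) powr p * (1 / T) powr q)"
    and "y powr p * d powr q = K * ((y / S) powr p * (d / T) powr q)"
    using S T assms by (simp_all add: K_def powr_divide)
  moreover have "(x / S) powr p * (1 / T) powr q \<le> p * (x / S) + q * (1 / T)"
    and "(y / S) powr p * (d / T) powr q \<le> p * (y / S) + q * (d / T)"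
    using assms S T by (simp_all only: Youngs_inequality_nonneg divide_nonneg_pos less_imp_le zero_le_one)
  ultimately have "x powr p + y powr p * d powr q
      \<le> K * (p * (x / S) + q * (1 / T)) + K * (p * (y / S) + q * (d / T))"
    by (simp add: K_def add_mono mult_left_mono)
  also have "\<dots> = K * (p * ((x + y) / S) + q * ((1 + d) / T))"
    by (simp add: add_divide_distrib ring_distribs)
  also have "\<dots> = K" using S T assms by (simp add: S_def T_def)
  finally show ?thesis by (simp add: K_def S_def T_def)
qed

lemma powr_le_of_add_le:
  fixes F A B C d p :: real
  assumes "0 < p" "p \<le> 1" "0 \<le> F" "0 \<le> A" "0 \<le> B" "0 \<le> C" "0 \<le> d" "F + C \<le> A + B"
  shows "F powr p \<le> (1 + d) powr (1 - p) * (A powr p + B powr p) - d powr (1 - p) * C powr p"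
proof -
  have "F powr p + C powr p * d powr (1 - p) \<le> (F + C) powr p * (1 + d) powr (1 - p)"
    using assms by (intro Holder_inequality_two_terms) auto
  also have "\<dots> \<le> (A + B) powr p * (1 + d) powr (1 - p)"
    using assms by (intro mult_right_mono powr_mono2) auto
  also have "\<dots> \<le> (A powr p + B powr p) * (1 + d) powr (1 - p)"
    using assms by (intro mult_right_mono powr_add_le_add_powr) auto
  finally show ?thesis by (simp add: algebra_simps)
qed

lemma continuous_midpoint_convex_le_max:
  fixes h :: "real \<Rightarrow> real"
  assumes cont: "continuous_on {a..b} h"
    and midpoint_convex: "\<And>s u. s \<in> {a..b} \<Longrightarrow> u \<in> {a..b} \<Longrightarrow> 2 * h ((s + u) / 2) \<le> h s + h u"
    and t: "t \<in> {a..b}"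
  shows "h t \<le> max (h a) (h b)"
proof -
  obtain m where m: "m \<in> {a..b}" "\<And>y. y \<in> {a..b} \<Longrightarrow> h y \<le> h m"
    using continuous_attains_sup[OF compact_Icc _ cont] t by force
  define S where "S = {x \<in> {a..b}. h x = h m}"
  have "closed S"
    unfolding S_def by (rule continuous_closed_preimage_constant[OF cont]) simp
  moreover have "bounded S"
    unfolding S_def by (rule bounded_subset[OF bounded_closed_interval]) auto
  ultimately have "compact S" by (simp add: compact_eq_bounded_closed)
  moreover have "S \<noteq> {}" using m S_def by auto
  ultimately obtain r where r: "r \<in> S" "\<And>y. y \<in> S \<Longrightarrow> y \<le> r"
    using continuous_attains_sup[OF _ _ continuous_on_id] by force
  \<comment> \<open>the rightmost maximiser is an endpoint: in the interior the point to its right is strictly lower\<close>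
  have "r = a \<or> r = b"
  proof (rule ccontr)
    assume interior: "\<not> (r = a \<or> r = b)"
    define e where "e = min (r - a) (b - r)"
    have e: "e > 0" "r - e \<in> {a..b}" "r + e \<in> {a..b}"
      using r interior unfolding S_def e_def by auto
    have "r + e \<notin> S" using r(2) e(1) by fastforce
    then have "h (r + e) < h r" using m(2)[OF e(3)] e(3) r(1) unfolding S_def by auto
    moreover have "h (r - e) \<le> h r" using m(2)[OF e(2)] r(1) unfolding S_def by auto
    moreover have "2 * h r \<le> h (r - e) + h (r + e)" using midpoint_convex[OF e(2,3)] by simp
    ultimately show False by linarith
  qed
  moreover have "h t \<le> h r" using m(2)[OF t] r(1) unfolding S_def by auto
  ultimately show ?thesis by auto
qed

lemma geodesic_continuous_on:
  assumes "geodesic \<gamma>"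
  shows "continuous_on {0..1} \<gamma>"
proof -
  have "(dist (\<gamma> 0) (\<gamma> 1))-lipschitz_on {0..1} \<gamma>"
  proof (rule lipschitz_onI)
    fix x y :: real
    assume "x \<in> {0..1}" "y \<in> {0..1}"
    with assms have "dist (\<gamma> x) (\<gamma> y) = \<bar>x - y\<bar> * dist (\<gamma> 0) (\<gamma> 1)"
      unfolding geodesic_def by blast
    then show "dist (\<gamma> x) (\<gamma> y) \<le> dist (\<gamma> 0) (\<gamma> 1) * dist x y"
      by (simp add: dist_real_def)
  qed simp
  then show ?thesis by (rule lipschitz_on_continuous_on)
qed

lemma NPC_geodesic_midpoint:
  fixes \<gamma> :: "real \<Rightarrow> 'a::metric_space"
  assumes npc: "NPC_space TYPE('a)" and g: "geodesic \<gamma>"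
    and s: "s \<in> {0..1}" and u: "u \<in> {0..1}"
  shows "(dist (\<gamma> ((s + u) / 2)) z)\<^sup>2
    \<le> (1/2) * (dist (\<gamma> s) z)\<^sup>2 + (1/2) * (dist (\<gamma> u) z)\<^sup>2 - (1/4) * ((u - s) * dist (\<gamma> 0) (\<gamma> 1))\<^sup>2"
proof -
  define D m where "D = dist (\<gamma> 0) (\<gamma> 1)" and "m = (s + u) / 2"
  obtain y where y: "\<And>w. (dist w y)\<^sup>2
      \<le> (1/2) * (dist w (\<gamma> s))\<^sup>2 + (1/2) * (dist w (\<gamma> u))\<^sup>2 - (1/4) * (dist (\<gamma> s) (\<gamma> u))\<^sup>2"
    using npc unfolding NPC_space_def by blast
  have dist_\<gamma>: "dist (\<gamma> a) (\<gamma> b) = \<bar>a - b\<bar> * D" if "a \<in> {0..1}" "b \<in> {0..1}" for a b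
    using g that unfolding geodesic_def D_def by blast
  have m: "m \<in> {0..1}" using s u m_def by auto
  have "(dist (\<gamma> m) y)\<^sup>2 \<le> (1/2) * (\<bar>m - s\<bar> * D)\<^sup>2 + (1/2) * (\<bar>m - u\<bar> * D)\<^sup>2 - (1/4) * (\<bar>s - u\<bar> * D)\<^sup>2"
    using y[of "\<gamma> m"] dist_\<gamma>[OF m s] dist_\<gamma>[OF m u] dist_\<gamma>[OF s u] by simp
  also have "\<dots> = ((1/2) * (m - s)\<^sup>2 + (1/2) * (m - u)\<^sup>2 - (1/4) * (s - u)\<^sup>2) * D\<^sup>2"
    by (simp add: power_mult_distrib algebra_simps)
  also have "(1/2) * (m - s)\<^sup>2 + (1/2) * (m - u)\<^sup>2 - (1/4) * (s - u)\<^sup>2 = 0"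
    unfolding m_def by (simp add: power2_eq_square field_simps)
  finally have "\<gamma> m = y" by simp
  then have "(dist (\<gamma> m) z)\<^sup>2
      \<le> (1/2) * (dist (\<gamma> s) z)\<^sup>2 + (1/2) * (dist (\<gamma> u) z)\<^sup>2 - (1/4) * ((u - s) * D)\<^sup>2"
    using y[of z] dist_\<gamma>[OF s u] by (simp add: dist_commute power_mult_distrib power2_commute)
  then show ?thesis by (simp only: m_def D_def)
qed

lemma NPC_geodesic_CN_inequality:
  fixes \<gamma> :: "real \<Rightarrow> 'a::metric_space"
  assumes npc: "NPC_space TYPE('a)" and g: "geodesic \<gamma>" and t: "t \<in> {0..1}"
  shows "(dist (\<gamma> t) z)\<^sup>2
    \<le> (1 - t) * (dist (\<gamma> 0) z)\<^sup>2 + t * (dist (\<gamma> 1) z)\<^sup>2 - t * (1 - t) * (dist (\<gamma> 0) (\<gamma> 1))\<^sup>2"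
proof -
  define D a b where "D = dist (\<gamma> 0) (\<gamma> 1)" and "a = dist (\<gamma> 0) z" and "b = dist (\<gamma> 1) z"
  define h where "h r = (dist (\<gamma> r) z)\<^sup>2 - r\<^sup>2 * D\<^sup>2 - ((1 - r) * a\<^sup>2 + r * (b\<^sup>2 - D\<^sup>2))" for r
  have "continuous_on {0..1} h"
    unfolding h_def
    by (intro continuous_intros continuous_on_compose2[OF continuous_on_dist[OF continuous_on_id continuous_on_const]
          geodesic_continuous_on[OF g]]) auto
  moreover have "2 * h ((s + u) / 2) \<le> h s + h u" if "s \<in> {0..1}" "u \<in> {0..1}" for s u
    using NPC_geodesic_midpoint[OF npc g that, of z]
    by (simp add: h_def D_def power2_eq_square field_simps)
  ultimately have "h t \<le> max (h 0) (h 1)"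
    using t by (rule continuous_midpoint_convex_le_max)
  then show ?thesis
    by (simp add: h_def a_def b_def D_def power2_eq_square algebra_simps)
qed

lemma power2_powr:
  fixes x p :: real
  assumes "0 \<le> x"
  shows "(x\<^sup>2) powr p = x powr (2 * p)"
  using assms powr_powr[of x 2 p] by simp

theorem proposition4p1:
  fixes \<gamma> :: "real \<Rightarrow> 'a::polish_space"
    and \<alpha> \<delta> t :: real and z :: 'a
  assumes "NPC_space TYPE('a)"
    and "geodesic \<gamma>"
    and "1 \<le> \<alpha>" "\<alpha> \<le> 2"
    and "0 \<le> \<delta>"
    and "0 \<le> t" "t \<le> 1"
  shows "dist (\<gamma> t) z \<^bold>^ \<alpha> \<le>
     (1 + \<delta>) \<^bold>^ (1 - \<alpha>/2) *
       ((1 - t) \<^bold>^ (\<alpha>/2) * dist (\<gamma> 0) z \<^bold>^ \<alpha> + t \<^bold>^ (\<alpha>/2) * dist (\<gamma> 1) z \<^bold>^ \<alpha>)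
     - \<delta> \<^bold>^ (1 - \<alpha>/2) * (t * (1 - t) * (dist (\<gamma> 0) (\<gamma> 1))^2) \<^bold>^ (\<alpha>/2)"
proof -
  define p where "p = \<alpha> / 2"
  have p: "0 < p" "p \<le> 1" "\<alpha> = 2 * p" using assms p_def by auto
  define F A B C where "F = (dist (\<gamma> t) z)\<^sup>2" and "A = (1 - t) * (dist (\<gamma> 0) z)\<^sup>2"
    and "B = t * (dist (\<gamma> 1) z)\<^sup>2" and "C = t * (1 - t) * (dist (\<gamma> 0) (\<gamma> 1))\<^sup>2"
  have nonneg: "0 \<le> F" "0 \<le> A" "0 \<le> B" "0 \<le> C" using assms by (auto simp: F_def A_def B_def C_def)
  have CN: "F + C \<le> A + B"
    using NPC_geodesic_CN_inequality[OF assms(1,2), of t z] assms by (simp add: F_def A_def B_def C_def)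
  have rpow_eqs: "dist (\<gamma> t) z \<^bold>^ \<alpha> = F powr p"
      "(1 - t) \<^bold>^ (\<alpha>/2) * dist (\<gamma> 0) z \<^bold>^ \<alpha> = A powr p"
      "t \<^bold>^ (\<alpha>/2) * dist (\<gamma> 1) z \<^bold>^ \<alpha> = B powr p"
      "(t * (1 - t) * (dist (\<gamma> 0) (\<gamma> 1))^2) \<^bold>^ (\<alpha>/2) = C powr p"
    using p assms by (simp_all add: rpow_def F_def A_def B_def C_def power2_powr powr_mult)
  show ?thesis
  proof (cases "p = 1")
    case True
    then show ?thesis using CN nonneg unfolding rpow_eqs by (simp add: rpow_def p_def)
  next
    case False
    then have "(1 + \<delta>) \<^bold>^ (1 - \<alpha>/2) = (1 + \<delta>) powr (1 - p)" "\<delta> \<^bold>^ (1 - \<alpha>/2) = \<delta> powr (1 - p)"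
      by (simp_all add: rpow_def p_def)
    then show ?thesis
      unfolding rpow_eqs using powr_le_of_add_le[OF p(1,2) nonneg \<open>0 \<le> \<delta>\<close> CN] by simp
  qed
qed

end
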